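(* Let $x$ be a test input with finite nonempty candidate-output set $\mathcal{Y}_x$, let $\sigma^*_x\colon \mathcal{Y}_x\to\mathbb{N}$ be the ground-truth ranking function on $\mathcal{Y}_x$, and let $\hat{\sigma}^U_x\colon\mathcal{Y}_x\to\mathbb{N}$ be the ranking derived from a utility function $U$ learnt by an $\epsilon$-convergent L2R algorithm, i.e. there is a non-negative integer $\epsilon$ with $\max_{y\in\mathcal{Y}_x}|\hat{\sigma}^U_x(y)-\sigma^*_x(y)|\le\epsilon$. Let $\pi^*$ be an optimal policy for $M_x(\sigma^*_x)$, and let $\hat{\pi}_n$ be the proper policy for $M_x(\hat{\sigma}^U_x)$ learnt by a $\delta$-convergent RL algorithm after $n$ episodes. Then, as $n\to\infty$, $$\lim_{n\to\infty}\mathcal{R}_{\sigma^*_x}(\hat{\pi}_n|x)\;\ge\;\mathcal{R}_{\sigma^*_x}(\pi^*|x)-\delta-\epsilon .$$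
   Context: Setting: for an input $x$, $\mathcal{Y}_x$ is the finite set of admissible outputs (e.g. extractive summaries of $x$ satisfying a length limit). A ranking function $\sigma_x\colon\mathcal{Y}_x\to\mathbb{N}$ assigns to each $y\in\mathcal{Y}_x$ the number of candidates in $\mathcal{Y}_x$ of equal or lower quality than $y$ (including $y$ itself) with respect to some quality preorder; in particular a highest-quality candidate gets value $|\mathcal{Y}_x|$. The ground-truth ranking $\sigma^*_x$ is of this form. Given a utility function $U(y,x)\in\mathbb{R}$, the derived ranking is $\hat{\sigma}^U_x(y)=|\{y'\in\mathcal{Y}_x: U(y',x)\le U(y,x)\}|$, so that $\hat{\sigma}^U_x(y_1)>\hat{\sigma}^U_x(y_2)$ iff $U(y_1,x)>U(y_2,x)$. $M_x(\sigma_x)$ denotes the episodic Markov decision process for generating an output for $x$ (states are partial outputs, actions add a component or terminate) in which the only nonzero reward is given at the end of an episode and equals $\sigma_x(y)$ for the generated output $y$. A policy $\pi$ induces probabilities $\pi(y|x)$ of generating $y\in\mathcal{Y}_x$; it is proper if $\sum_{y\in\mathcal{Y}_x}\pi(y|x)=1$. For a proper policy the expected reward is $\mathcal{R}_{\sigma_x}(\pi|x)=\sum_{y\in\mathcal{Y}_x}\pi(y|x)\sigma_x(y)$, and an optimal policy for $M_x(\sigma_x)$ is one maximizing this quantity (so it puts positive probability only on outputs with $\sigma_x(y)=|\mathcal{Y}_x|$ and has expected reward $|\mathcal{Y}_x|$). An RL algorithm is $\delta$-convergent for $M_x(\sigma_x)$ (with $\delta\in\mathbb{R}_{\ge0}$)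 if, denoting by $\pi_n$ its policy after $n$ episodes of learning and by $\pi^*$ an optimal policy for $M_x(\sigma_x)$, $\lim_{n\to\infty}\big(\mathcal{R}_{\sigma_x}(\pi^*|x)-\mathcal{R}_{\sigma_x}(\pi_n|x)\big)\le\delta$. *)

theory Defs
  imports "HOL-Analysis.Analysis"
begin

text \<open>A ranking function on the candidate set Y induced by a (total) quality preorder le:
  sigma y is the number of candidates of equal or lower quality than y (including y).\<close>
definition is_ranking_fn :: "'y set \<Rightarrow> ('y \<Rightarrow> nat) \<Rightarrow> bool" where
  "is_ranking_fn Y \<sigma> \<longleftrightarrow>
     (\<exists>le :: 'y \<Rightarrow> 'y \<Rightarrow> bool.
        (\<forall>y\<in>Y. le y y) \<and>
        (\<forall>a\<in>Y. \<forall>b\<in>Y. \<forall>c\<in>Y. le a b \<longrightarrow> le b c \<longrightarrow> le a c) \<and>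
        (\<forall>a\<in>Y. \<forall>b\<in>Y. le a b \<or> le b a) \<and>
        (\<forall>y\<in>Y. \<sigma> y = card {y'\<in>Y. le y' y}))"

text \<open>Ranking derived from a utility function U (for the fixed input x, U is a function of y).\<close>
definition derived_ranking :: "'y set \<Rightarrow> ('y \<Rightarrow> real) \<Rightarrow> 'y \<Rightarrow> nat" where
  "derived_ranking Y U y = card {y'\<in>Y. U y' \<le> U y}"

text \<open>A policy is represented by the probabilities pi y of generating each output y.\<close>
definition proper_policy :: "'y set \<Rightarrow> ('y \<Rightarrow> real) \<Rightarrow> bool" where
  "proper_policy Y \<pi> \<longleftrightarrow> (\<forall>y\<in>Y. 0 \<le> \<pi> y) \<and> (\<Sum>y\<in>Y. \<pi> y) = 1"

definition expected_reward :: "'y set \<Rightarrow> ('y \<Rightarrow> nat) \<Rightarrow> ('y \<Rightarrow> real) \<Rightarrow> real" where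
  "expected_reward Y \<sigma> \<pi> = (\<Sum>y\<in>Y. \<pi> y * real (\<sigma> y))"

definition optimal_policy :: "'y set \<Rightarrow> ('y \<Rightarrow> nat) \<Rightarrow> ('y \<Rightarrow> real) \<Rightarrow> bool" where
  "optimal_policy Y \<sigma> \<pi> \<longleftrightarrow> proper_policy Y \<pi> \<and>
     (\<forall>\<pi>'. proper_policy Y \<pi>' \<longrightarrow> expected_reward Y \<sigma> \<pi>' \<le> expected_reward Y \<sigma> \<pi>)"

text \<open>delta-convergence of the sequence of learnt policies pis n (policy after n episodes)
  for M_x(sigma): the optimality gap converges and its limit is at most delta.\<close>
definition delta_convergent :: "'y set \<Rightarrow> ('y \<Rightarrow> nat) \<Rightarrow> (nat \<Rightarrow> 'y \<Rightarrow> real) \<Rightarrow> real \<Rightarrow> bool" where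
  "delta_convergent Y \<sigma> \<pi>s \<delta> \<longleftrightarrow>
     (\<forall>\<pi>opt. optimal_policy Y \<sigma> \<pi>opt \<longrightarrow>
        (let gap = (\<lambda>n. expected_reward Y \<sigma> \<pi>opt - expected_reward Y \<sigma> (\<pi>s n))
         in convergent gap \<and> lim gap \<le> \<delta>))"

end

theory Submission
  imports Defs
begin

text \<open>The reward of the learnt policies measured with the derived ranking converges to a value
  at least the optimum minus \<open>\<delta>\<close>. For the derived ranking the optimum is \<open>|Y|\<close>, attained by
  the point mass at a maximiser of \<open>U\<close>, and \<open>|Y|\<close> also bounds every reward under the true ranking.
  Since the two rankings differ by at most \<open>\<epsilon>\<close> pointwise, the rewards of any proper policy under
  them differ by at most \<open>\<epsilon>\<close>.\<close>

lemma ranking_fn_le_card: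
  assumes "finite Y" "is_ranking_fn Y \<sigma>" "y \<in> Y"
  shows "\<sigma> y \<le> card Y"
proof -
  obtain le where "\<sigma> y = card {y'\<in>Y. le y' y}"
    using assms(2,3) unfolding is_ranking_fn_def by blast
  also have "\<dots> \<le> card Y"
    using assms(1) by (intro card_mono) auto
  finally show ?thesis .
qed

lemma derived_ranking_le_card:
  assumes "finite Y"
  shows "derived_ranking Y U y \<le> card Y"
  unfolding derived_ranking_def using assms by (intro card_mono) auto

lemma derived_ranking_argmax:
  assumes "\<forall>y\<in>Y. U y \<le> U y0"
  shows "derived_ranking Y U y0 = card Y"
proof -
  have "{y'\<in>Y. U y' \<le> U y0} = Y" using assms by auto
  then show ?thesis unfolding derived_ranking_def by simp
qed

lemma expected_reward_le:
  assumes "proper_policy Y \<pi>" "\<forall>y\<in>Y. \<sigma> y \<le> M"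
  shows "expected_reward Y \<sigma> \<pi> \<le> real M"
proof -
  have "expected_reward Y \<sigma> \<pi> \<le> (\<Sum>y\<in>Y. \<pi> y * real M)"
    unfolding expected_reward_def using assms
    by (intro sum_mono mult_left_mono) (auto simp: proper_policy_def)
  also have "\<dots> = real M"
    using assms(1) by (simp add: sum_distrib_right[symmetric] proper_policy_def)
  finally show ?thesis .
qed

lemma expected_reward_diff_le:
  assumes "proper_policy Y \<pi>" "\<forall>y\<in>Y. \<bar>int (\<sigma>1 y) - int (\<sigma>2 y)\<bar> \<le> int e"
  shows "expected_reward Y \<sigma>1 \<pi> - real e \<le> expected_reward Y \<sigma>2 \<pi>"
proof -
  have "expected_reward Y \<sigma>1 \<pi> \<le> (\<Sum>y\<in>Y. \<pi> y * (real (\<sigma>2 y) + real e))"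
    unfolding expected_reward_def using assms
    by (intro sum_mono mult_left_mono) (auto simp: proper_policy_def abs_le_iff)
  also have "\<dots> = expected_reward Y \<sigma>2 \<pi> + real e"
    using assms(1)
    by (simp add: expected_reward_def distrib_left sum.distrib sum_distrib_right[symmetric]
        proper_policy_def)
  finally show ?thesis by simp
qed

lemma proper_policy_indicator:
  assumes "finite Y" "y0 \<in> Y"
  shows "proper_policy Y (indicator {y0})"
  using assms by (simp add: proper_policy_def indicator_def)

lemma expected_reward_indicator:
  assumes "finite Y" "y0 \<in> Y"
  shows "expected_reward Y \<sigma> (indicator {y0}) = real (\<sigma> y0)"
proof -
  have "expected_reward Y \<sigma> (indicator {y0}) = (\<Sum>y\<in>Y. if y = y0 then real (\<sigma> y) else 0)"
    unfolding expected_reward_def by (intro sum.cong) auto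
  then show ?thesis using assms by simp
qed

lemma optimal_policy_indicator_max:
  assumes "finite Y" "y0 \<in> Y" "\<forall>y\<in>Y. \<sigma> y \<le> \<sigma> y0"
  shows "optimal_policy Y \<sigma> (indicator {y0})"
  unfolding optimal_policy_def
  using assms proper_policy_indicator expected_reward_indicator expected_reward_le by metis

lemma delta_convergent_tendsto:
  assumes "delta_convergent Y \<sigma> \<pi>s \<delta>" "optimal_policy Y \<sigma> \<pi>opt"
  obtains r where "(\<lambda>n. expected_reward Y \<sigma> (\<pi>s n)) \<longlonglongrightarrow> r"
    and "expected_reward Y \<sigma> \<pi>opt - \<delta> \<le> r"
proof -
  define gap where "gap n = expected_reward Y \<sigma> \<pi>opt - expected_reward Y \<sigma> (\<pi>s n)" for n
  have "convergent gap" "lim gap \<le> \<delta>"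
    using assms unfolding delta_convergent_def gap_def by (metis (no_types, lifting))+
  then have "gap \<longlonglongrightarrow> lim gap" by (simp add: convergent_LIMSEQ_iff)
  then have "(\<lambda>n. expected_reward Y \<sigma> \<pi>opt - gap n) \<longlonglongrightarrow> expected_reward Y \<sigma> \<pi>opt - lim gap"
    by (intro tendsto_intros)
  then show ?thesis
    using that \<open>lim gap \<le> \<delta>\<close> by (simp add: gap_def)
qed

lemma liminf_ge_of_tendsto_le:
  fixes f g :: "nat \<Rightarrow> real"
  assumes "f \<longlonglongrightarrow> a" "\<forall>n. f n \<le> g n"
  shows "ereal a \<le> liminf (\<lambda>n. ereal (g n))"
proof -
  have "(\<lambda>n. ereal (f n)) \<longlonglongrightarrow> ereal a" using assms(1) by simp
  then have "liminf (\<lambda>n. ereal (f n)) = ereal a" by (intro lim_imp_Liminf) simp_all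
  moreover have "liminf (\<lambda>n. ereal (f n)) \<le> liminf (\<lambda>n. ereal (g n))"
    using assms(2) by (intro Liminf_mono) simp
  ultimately show ?thesis by simp
qed

theorem theorem1:
  fixes Y :: "'y set" and \<sigma>star :: "'y \<Rightarrow> nat" and U :: "'y \<Rightarrow> real"
    and \<epsilon> :: nat and \<delta> :: real
    and \<pi>star :: "'y \<Rightarrow> real" and \<pi>hat :: "nat \<Rightarrow> 'y \<Rightarrow> real"
  assumes "finite Y" and "Y \<noteq> {}"
    and "is_ranking_fn Y \<sigma>star"
    and "\<forall>y\<in>Y. \<bar>int (derived_ranking Y U y) - int (\<sigma>star y)\<bar> \<le> int \<epsilon>"
    and "optimal_policy Y \<sigma>star \<pi>star"
    and "0 \<le> \<delta>"
    and "\<forall>n. proper_policy Y (\<pi>hat n)"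
    and "delta_convergent Y (derived_ranking Y U) \<pi>hat \<delta>"
  shows "liminf (\<lambda>n. ereal (expected_reward Y \<sigma>star (\<pi>hat n)))
           \<ge> ereal (expected_reward Y \<sigma>star \<pi>star - \<delta> - real \<epsilon>)"
proof -
  let ?\<sigma> = "derived_ranking Y U"
  have "Max (U ` Y) \<in> U ` Y" using assms(1,2) by simp
  then obtain y0 where "y0 \<in> Y" "U y0 = Max (U ` Y)" by auto
  with assms(1) have y0: "y0 \<in> Y" "\<forall>y\<in>Y. U y \<le> U y0" by simp_all
  have rank_y0: "?\<sigma> y0 = card Y"
    using y0(2) by (rule derived_ranking_argmax)
  have "optimal_policy Y ?\<sigma> (indicator {y0})"
    using assms(1) y0(1)
    by (rule optimal_policy_indicator_max) (simp add: rank_y0 derived_ranking_le_card assms(1))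
  then obtain r where r: "(\<lambda>n. expected_reward Y ?\<sigma> (\<pi>hat n)) \<longlonglongrightarrow> r"
    "expected_reward Y ?\<sigma> (indicator {y0}) - \<delta> \<le> r"
    using assms(8) delta_convergent_tendsto by blast
  have reward_y0: "expected_reward Y ?\<sigma> (indicator {y0}) = card Y"
    using assms(1) y0(1) by (simp add: expected_reward_indicator rank_y0)
  have "(\<lambda>n. expected_reward Y ?\<sigma> (\<pi>hat n) - real \<epsilon>) \<longlonglongrightarrow> r - real \<epsilon>"
    using r(1) by (intro tendsto_intros)
  moreover have "\<forall>n. expected_reward Y ?\<sigma> (\<pi>hat n) - real \<epsilon> \<le> expected_reward Y \<sigma>star (\<pi>hat n)"
    using assms(4,7) expected_reward_diff_le by blast
  ultimately have "ereal (r - real \<epsilon>) \<le> liminf (\<lambda>n. ereal (expected_reward Y \<sigma>star (\<pi>hat n)))"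
    by (rule liminf_ge_of_tendsto_le)
  moreover have "expected_reward Y \<sigma>star \<pi>star \<le> card Y"
    using assms(5) ranking_fn_le_card[OF assms(1,3)] expected_reward_le
    unfolding optimal_policy_def by blast
  then have "ereal (expected_reward Y \<sigma>star \<pi>star - \<delta> - real \<epsilon>) \<le> ereal (r - real \<epsilon>)"
    using r(2) reward_y0 by simp
  ultimately show ?thesis by (rule order_trans[rotated])
qed

end
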